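(* Let $D$ be a tournament missing disjoint paths of length 2 and let $C$ be a double cycle in $\Delta(D)$. Then $K(C)$ is an interval of $D$, i.e. for all $u,v\in K(C)$ we have $N^+(u)\setminus K(C)=N^+(v)\setminus K(C)$ and $N^-(u)\setminus K(C)=N^-(v)\setminus K(C)$.
   Context: All digraphs are finite oriented graphs; $N^+(v)$, $N^-(v)$ are out- and in-neighborhoods in $D$, and $N^{++}(v)$ is the set of vertices $w\notin N^+(v)\cup\{v\}$ with $u\to w$ for some $u\in N^+(v)$. A missing edge is a pair of distinct non-adjacent vertices; the missing graph is formed by the missing edges. $D$ is a tournament missing disjoint paths of length 2 if its missing graph is a vertex-disjoint union of paths each with exactly two edges. For missing edges $\{x,y\},\{a,b\}$, $\{x,y\}$ loses to $\{a,b\}$ (written $xy\to ab$) if the endpoints can be labelled so that $x\to a$, $b\notin N^+(x)\cup N^{++}(x)$, $y\to b$, $a\notin N^+(y)\cup N^{++}(y)$. $\Delta(D)$ has the missing edges as vertices and arcs $(e,e')$ whenever $e$ loses to $e'$. For missing paths $abc$, $xyz$ (edges $ab,bc$ and $xy,yz$), $abc\to xyz$ means each of $ab,bc$ loses to each of $xy,yz$. A double cycle is a sequence $C=a_1b_1c_1,\dots,a_kb_kc_k$ ($k\ge2$) of distinct missing paths of length 2 (components of the missing graph) with $a_ib_ic_i\to a_{i+1}b_{i+1}c_{i+1}$ for all $i$, indices modulo $k$. $K(C)=\{a_i,b_i,c_i: 1\le i\le k\}$. *)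

theory Defs
  imports Main
begin

definition oriented_graph :: "'a set \<Rightarrow> ('a \<Rightarrow> 'a \<Rightarrow> bool) \<Rightarrow> bool" where
  "oriented_graph V arc \<longleftrightarrow> finite V \<and>
     (\<forall>u v. arc u v \<longrightarrow> u \<in> V \<and> v \<in> V) \<and>
     (\<forall>u. \<not> arc u u) \<and> (\<forall>u v. arc u v \<longrightarrow> \<not> arc v u)"

definition outN :: "'a set \<Rightarrow> ('a \<Rightarrow> 'a \<Rightarrow> bool) \<Rightarrow> 'a \<Rightarrow> 'a set" where
  "outN V arc v = {w \<in> V. arc v w}"

definition inN :: "'a set \<Rightarrow> ('a \<Rightarrow> 'a \<Rightarrow> bool) \<Rightarrow> 'a \<Rightarrow> 'a set" where
  "inN V arc v = {w \<in> V. arc w v}"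

definition outN2 :: "'a set \<Rightarrow> ('a \<Rightarrow> 'a \<Rightarrow> bool) \<Rightarrow> 'a \<Rightarrow> 'a set" where
  "outN2 V arc v = {w \<in> V. w \<notin> outN V arc v \<and> w \<noteq> v \<and> (\<exists>u \<in> outN V arc v. arc u w)}"

definition missing :: "'a set \<Rightarrow> ('a \<Rightarrow> 'a \<Rightarrow> bool) \<Rightarrow> 'a \<Rightarrow> 'a \<Rightarrow> bool" where
  "missing V arc x y \<longleftrightarrow> x \<in> V \<and> y \<in> V \<and> x \<noteq> y \<and> \<not> arc x y \<and> \<not> arc y x"

text \<open>a b c is a component of the missing graph which is a path with exactly the two edges ab, bc.\<close>
definition missing_path :: "'a set \<Rightarrow> ('a \<Rightarrow> 'a \<Rightarrow> bool) \<Rightarrow> 'a \<Rightarrow> 'a \<Rightarrow> 'a \<Rightarrow> bool" where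
  "missing_path V arc a b c \<longleftrightarrow> a \<noteq> c \<and> missing V arc a b \<and> missing V arc b c \<and>
     (\<forall>w. missing V arc a w \<longrightarrow> w = b) \<and>
     (\<forall>w. missing V arc c w \<longrightarrow> w = b) \<and>
     (\<forall>w. missing V arc b w \<longrightarrow> w = a \<or> w = c)"

text \<open>D is a tournament missing disjoint paths of length 2: the missing graph is a
  vertex-disjoint union of paths with exactly two edges, i.e. every missing edge
  lies in such a component.\<close>
definition tournament_missing_P2 :: "'a set \<Rightarrow> ('a \<Rightarrow> 'a \<Rightarrow> bool) \<Rightarrow> bool" where
  "tournament_missing_P2 V arc \<longleftrightarrow> oriented_graph V arc \<and>
     (\<forall>x y. missing V arc x y \<longrightarrow>
        (\<exists>a b c. missing_path V arc a b c \<and> ({x, y} = {a, b} \<or> {x, y} = {b, c})))"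

definition loses :: "'a set \<Rightarrow> ('a \<Rightarrow> 'a \<Rightarrow> bool) \<Rightarrow> 'a set \<Rightarrow> 'a set \<Rightarrow> bool" where
  "loses V arc e f \<longleftrightarrow> (\<exists>x y a b. e = {x, y} \<and> f = {a, b} \<and>
     arc x a \<and> b \<notin> outN V arc x \<union> outN2 V arc x \<and>
     arc y b \<and> a \<notin> outN V arc y \<union> outN2 V arc y)"

definition path_loses :: "'a set \<Rightarrow> ('a \<Rightarrow> 'a \<Rightarrow> bool) \<Rightarrow> 'a \<times> 'a \<times> 'a \<Rightarrow> 'a \<times> 'a \<times> 'a \<Rightarrow> bool" where
  "path_loses V arc p q \<longleftrightarrow> (case p of (a, b, c) \<Rightarrow> case q of (x, y, z) \<Rightarrow>
     (\<forall>e \<in> {{a, b}, {b, c}}. \<forall>f \<in> {{x, y}, {y, z}}. loses V arc e f))"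

definition double_cycle :: "'a set \<Rightarrow> ('a \<Rightarrow> 'a \<Rightarrow> bool) \<Rightarrow> nat \<Rightarrow> (nat \<Rightarrow> 'a \<times> 'a \<times> 'a) \<Rightarrow> bool" where
  "double_cycle V arc k P \<longleftrightarrow> k \<ge> 2 \<and>
     (\<forall>i<k. case P i of (a, b, c) \<Rightarrow> missing_path V arc a b c) \<and>
     inj_on (\<lambda>i. case P i of (a, b, c) \<Rightarrow> {a, b, c}) {..<k} \<and>
     (\<forall>i<k. path_loses V arc (P i) (P (Suc i mod k)))"

definition KC :: "nat \<Rightarrow> (nat \<Rightarrow> 'a \<times> 'a \<times> 'a) \<Rightarrow> 'a set" where
  "KC k P = (\<Union>i<k. case P i of (a, b, c) \<Rightarrow> {a, b, c})"

end

theory Submission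
  imports Defs
begin

text \<open>
  Fix a vertex \<open>w\<close> outside \<open>K(C)\<close>; it is adjacent to every vertex of \<open>K(C)\<close>, since missing
  edges stay inside their own path. If the missing edge \<open>xy\<close> loses to \<open>ab\<close> (with \<open>x \<rightarrow> a\<close>,
  \<open>y \<rightarrow> b\<close>), then \<open>b\<close> cannot be reached from \<open>x\<close> in at most two steps, so \<open>b\<close> dominates \<open>x\<close>
  together with all out-neighbours of \<open>x\<close> adjacent to \<open>b\<close>; likewise \<open>a\<close> for \<open>y\<close>. Hence the
  number of arcs from a missing edge into \<open>w\<close> can only grow along the double cycle, so it is
  constant. If it is 0 or 2, all of \<open>K(C)\<close> lies on the same side of \<open>w\<close>. If it is 1, the
  endpoints sending an arc to \<open>w\<close> form a cyclic sequence in which each vertex dominates its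
  predecessor and everything its predecessor dominates; going once around the cycle produces
  a pair of opposite arcs.
\<close>

lemma missing_sym: "missing V arc x y \<longleftrightarrow> missing V arc y x"
  unfolding missing_def by auto

lemma arc_if_not_missing:
  "x \<in> V \<Longrightarrow> y \<in> V \<Longrightarrow> x \<noteq> y \<Longrightarrow> \<not> missing V arc x y \<Longrightarrow> arc x y \<or> arc y x"
  unfolding missing_def by auto

lemma oriented_graph_arc_vertices: "oriented_graph V arc \<Longrightarrow> arc u v \<Longrightarrow> u \<in> V \<and> v \<in> V"
  unfolding oriented_graph_def by blast

lemma oriented_graph_asym: "oriented_graph V arc \<Longrightarrow> arc u v \<Longrightarrow> \<not> arc v u"
  unfolding oriented_graph_def by blast

definition absorbs :: "'a set \<Rightarrow> ('a \<Rightarrow> 'a \<Rightarrow> bool) \<Rightarrow> 'a \<Rightarrow> 'a \<Rightarrow> bool" where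
  "absorbs V arc b x \<longleftrightarrow> arc b x \<and> (\<forall>v. arc x v \<longrightarrow> \<not> missing V arc v b \<longrightarrow> arc b v)"

lemma absorbs_if_not_within_two_steps:
  assumes og: "oriented_graph V arc" and "x \<in> V" "b \<in> V" "b \<noteq> x"
    and adjacent: "\<not> missing V arc x b"
    and far: "b \<notin> outN V arc x \<union> outN2 V arc x"
  shows "absorbs V arc b x"
  unfolding absorbs_def
proof (intro conjI allI impI)
  show "arc b x"
    using arc_if_not_missing[OF \<open>x \<in> V\<close> \<open>b \<in> V\<close>] assms by (auto simp: outN_def)
next
  fix v assume xv: "arc x v" and "\<not> missing V arc v b"
  have "v \<in> V" using oriented_graph_arc_vertices[OF og xv] by simp
  moreover have "v \<noteq> b" using xv far \<open>b \<in> V\<close> by (auto simp: outN_def)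
  ultimately have "arc v b \<or> arc b v"
    using arc_if_not_missing[OF _ \<open>b \<in> V\<close>] \<open>\<not> missing V arc v b\<close> by blast
  moreover have "\<not> arc v b"
    using far xv \<open>v \<in> V\<close> \<open>b \<in> V\<close> \<open>b \<noteq> x\<close> by (auto simp: outN_def outN2_def)
  ultimately show "arc b v" by blast
qed

lemma loses_absorbs:
  assumes og: "oriented_graph V arc" and "loses V arc {p, q} {r, s}" and "missing V arc p q"
    and cross: "\<And>u v. u \<in> {p, q} \<Longrightarrow> v \<in> {r, s} \<Longrightarrow> \<not> missing V arc u v"
  obtains x y a b where "{x, y} = {p, q}" "{a, b} = {r, s}"
    "absorbs V arc b x" "absorbs V arc a y"
proof -
  obtain x y a b where xy: "{p, q} = {x, y}" and ab: "{r, s} = {a, b}"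
    and xa: "arc x a" and bx: "b \<notin> outN V arc x \<union> outN2 V arc x"
    and yb: "arc y b" and ay: "a \<notin> outN V arc y \<union> outN2 V arc y"
    using \<open>loses V arc {p, q} {r, s}\<close> unfolding loses_def by blast
  have "missing V arc x y" using \<open>missing V arc p q\<close> xy by (metis doubleton_eq_iff missing_sym)
  then have "b \<noteq> x" "a \<noteq> y" using xa yb by (auto simp: missing_def)
  have V: "x \<in> V" "y \<in> V" "a \<in> V" "b \<in> V"
    using oriented_graph_arc_vertices[OF og xa] oriented_graph_arc_vertices[OF og yb] by auto
  have "\<not> missing V arc x b" "\<not> missing V arc y a" using cross xy ab by auto
  then have "absorbs V arc b x" "absorbs V arc a y"
    using absorbs_if_not_within_two_steps[OF og] V bx ay \<open>b \<noteq> x\<close> \<open>a \<noteq> y\<close> by auto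
  with xy ab show ?thesis using that by auto
qed

definition arcs_into :: "('a \<Rightarrow> 'a \<Rightarrow> bool) \<Rightarrow> 'a \<Rightarrow> 'a \<Rightarrow> 'a \<Rightarrow> nat" where
  "arcs_into arc w p q = (if arc p w then 1 else 0) + (if arc q w then 1 else 0)"

lemma arcs_into_cong: "{p, q} = {x, y} \<Longrightarrow> arcs_into arc w p q = arcs_into arc w x y"
  unfolding arcs_into_def doubleton_eq_iff by auto

lemma loses_arcs_into_mono:
  assumes og: "oriented_graph V arc" and "loses V arc {p, q} {r, s}" and "missing V arc p q"
    and "\<And>u v. u \<in> {p, q} \<Longrightarrow> v \<in> {r, s} \<Longrightarrow> \<not> missing V arc u v"
    and "\<not> missing V arc r w" "\<not> missing V arc s w"
  shows "arcs_into arc w p q \<le> arcs_into arc w r s"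
proof -
  obtain x y a b where xy: "{x, y} = {p, q}" and ab: "{a, b} = {r, s}"
    and "absorbs V arc b x" "absorbs V arc a y"
    using loses_absorbs assms(1-4) .
  moreover have "\<not> missing V arc w v" if "v \<in> {r, s}" for v
    using that assms(5,6) by (auto simp: missing_sym[of V arc w])
  ultimately have "arc x w \<Longrightarrow> arc b w" "arc y w \<Longrightarrow> arc a w"
    unfolding absorbs_def using ab by blast+
  then have "arcs_into arc w x y \<le> arcs_into arc w a b"
    unfolding arcs_into_def by auto
  then show ?thesis using arcs_into_cong[OF xy] arcs_into_cong[OF ab] by simp
qed

lemma loses_arcs_into_one_absorbs:
  assumes og: "oriented_graph V arc" and "loses V arc {p, q} {r, s}"
    and "missing V arc p q" "missing V arc r s"
    and "\<And>u v. u \<in> {p, q} \<Longrightarrow> v \<in> {r, s} \<Longrightarrow> \<not> missing V arc u v"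
    and "\<not> missing V arc r w" "\<not> missing V arc s w"
    and one: "arcs_into arc w r s = 1"
    and u: "u \<in> {p, q}" "arc u w" and r': "r' \<in> {r, s}" "arc r' w"
  shows "absorbs V arc r' u"
proof -
  obtain x y a b where xy: "{x, y} = {p, q}" and ab: "{a, b} = {r, s}"
    and bx: "absorbs V arc b x" and ay: "absorbs V arc a y"
    using loses_absorbs assms(1-3,5) .
  have "a \<noteq> b" using \<open>missing V arc r s\<close> ab by (auto simp: missing_def doubleton_eq_iff)
  have one': "arcs_into arc w a b = 1" using one arcs_into_cong[OF ab] by simp
  have "\<not> missing V arc w v" if "v \<in> {r, s}" for v
    using that assms(6,7) by (auto simp: missing_sym[of V arc w])
  then have "arc x w \<Longrightarrow> arc b w" "arc y w \<Longrightarrow> arc a w"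
    using bx ay ab unfolding absorbs_def by blast+
  moreover have "arc b w \<Longrightarrow> r' = b" "arc a w \<Longrightarrow> r' = a"
    using one' r' ab \<open>a \<noteq> b\<close> unfolding arcs_into_def by (auto split: if_splits)
  moreover have "u = x \<or> u = y" using u xy by auto
  ultimately show ?thesis using \<open>arc u w\<close> bx ay by auto
qed

lemma cyclically_mono_const:
  fixes f :: "nat \<Rightarrow> 'b::order"
  assumes "0 < k" and mono: "\<And>i. i < k \<Longrightarrow> f i \<le> f (Suc i mod k)" and "i < k"
  shows "f i = f 0"
proof -
  have step: "f n \<le> f (Suc n)" if "n \<in> {..<k - 1}" for n
    using mono[of n] that by simp
  have up: "f m \<le> f n" if "m \<le> n" "n < k" for m n
    using that by (intro lift_Suc_mono_le_ivl[of "{..<k - 1}" f m n, OF step]) auto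
  have "f (k - 1) \<le> f 0" using mono[of "k - 1"] \<open>0 < k\<close> by simp
  moreover have "f i \<le> f (k - 1)" "f 0 \<le> f i" using up \<open>i < k\<close> by auto
  ultimately show ?thesis by (metis order_antisym order_trans)
qed

lemma no_absorbing_cycle:
  assumes og: "oriented_graph V arc" and "2 \<le> k"
    and absorbs: "\<And>i. i < k \<Longrightarrow> absorbs V arc (s (Suc i mod k)) (s i)"
    and adjacent: "\<And>i j. i < k \<Longrightarrow> j < k \<Longrightarrow> i \<noteq> j \<Longrightarrow> \<not> missing V arc (s i) (s j)"
  shows False
proof -
  have "0 < m \<Longrightarrow> m < k \<Longrightarrow> arc (s m) (s 0)" for m
  proof (induction m)
    case 0
    then show ?case by simp
  next
    case (Suc m)
    have "absorbs V arc (s (Suc m)) (s m)" using absorbs[of m] Suc.prems by simp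
    then show ?case
      using Suc adjacent[of 0 "Suc m"] \<open>2 \<le> k\<close> unfolding absorbs_def by (cases m) auto
  qed
  then have "arc (s (k - 1)) (s 0)" using \<open>2 \<le> k\<close> by simp
  moreover have "arc (s 0) (s (k - 1))"
    using absorbs[of "k - 1"] \<open>2 \<le> k\<close> by (simp add: absorbs_def)
  ultimately show False using oriented_graph_asym[OF og] by blast
qed

lemma missing_path_closed:
  "missing_path V arc a b c \<Longrightarrow> u \<in> {a, b, c} \<Longrightarrow> missing V arc u v \<Longrightarrow> v \<in> {a, b, c}"
  unfolding missing_path_def by blast

lemma missing_path_overlap_subset:
  assumes abc: "missing_path V arc a b c" and xyz: "missing_path V arc x y z"
    and "v \<in> {a, b, c}" "v \<in> {x, y, z}"
  shows "{a, b, c} \<subseteq> {x, y, z}"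
proof -
  have "missing V arc a b" "missing V arc b c" using abc unfolding missing_path_def by auto
  then have "v = b \<or> missing V arc v b"
    using \<open>v \<in> {a, b, c}\<close> by (auto simp: missing_sym[of V arc a b] missing_sym[of V arc c b])
  then have "b \<in> {x, y, z}"
    using \<open>v \<in> {x, y, z}\<close> missing_path_closed[OF xyz, of v b] by blast
  moreover have "a \<in> {x, y, z}"
    using missing_path_closed[OF xyz \<open>b \<in> {x, y, z}\<close>] \<open>missing V arc a b\<close>
    by (simp add: missing_sym[of V arc a b])
  moreover have "c \<in> {x, y, z}"
    using missing_path_closed[OF xyz \<open>b \<in> {x, y, z}\<close> \<open>missing V arc b c\<close>] .
  ultimately show ?thesis by blast
qed

locale double_cycle_in_P2_tournament =
  fixes V :: "'a set" and arc :: "'a \<Rightarrow> 'a \<Rightarrow> bool"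
    and k :: nat and P :: "nat \<Rightarrow> 'a \<times> 'a \<times> 'a"
  assumes tournament: "tournament_missing_P2 V arc"
    and cycle: "double_cycle V arc k P"
begin

definition pa :: "nat \<Rightarrow> 'a" where "pa i = fst (P i)"
definition pb :: "nat \<Rightarrow> 'a" where "pb i = fst (snd (P i))"
definition pc :: "nat \<Rightarrow> 'a" where "pc i = snd (snd (P i))"
definition verts :: "nat \<Rightarrow> 'a set" where "verts i = {pa i, pb i, pc i}"

lemma P_eq: "P i = (pa i, pb i, pc i)"
  by (simp add: pa_def pb_def pc_def)

lemma oriented: "oriented_graph V arc"
  using tournament unfolding tournament_missing_P2_def by (rule conjunct1)

lemma k_ge_2: "2 \<le> k"
  using cycle unfolding double_cycle_def by (rule conjunct1)

lemma Suc_mod_less: "i < k \<Longrightarrow> Suc i mod k < k"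
  using k_ge_2 by simp

lemma Suc_mod_neq: "i < k \<Longrightarrow> Suc i mod k \<noteq> i"
  using k_ge_2 by (cases "Suc i = k") auto

lemma missing_path_at: "i < k \<Longrightarrow> missing_path V arc (pa i) (pb i) (pc i)"
  using cycle unfolding double_cycle_def by (metis (mono_tags) P_eq case_prod_conv)

lemma missing_edges_at:
  "i < k \<Longrightarrow> missing V arc (pa i) (pb i)" "i < k \<Longrightarrow> missing V arc (pb i) (pc i)"
  using missing_path_at unfolding missing_path_def by blast+

lemma loses_next:
  assumes "i < k" "e \<in> {{pa i, pb i}, {pb i, pc i}}"
    "f \<in> {{pa (Suc i mod k), pb (Suc i mod k)}, {pb (Suc i mod k), pc (Suc i mod k)}}"
  shows "loses V arc e f"
proof -
  have "path_loses V arc (P i) (P (Suc i mod k))"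
    using cycle[unfolded double_cycle_def, THEN conjunct2, THEN conjunct2, THEN conjunct2] \<open>i < k\<close>
    by blast
  then have "path_loses V arc (pa i, pb i, pc i)
      (pa (Suc i mod k), pb (Suc i mod k), pc (Suc i mod k))"
    by (simp only: P_eq)
  then have "\<forall>e \<in> {{pa i, pb i}, {pb i, pc i}}.
      \<forall>f \<in> {{pa (Suc i mod k), pb (Suc i mod k)}, {pb (Suc i mod k), pc (Suc i mod k)}}.
        loses V arc e f"
    unfolding path_loses_def by (simp only: case_prod_conv)
  then show ?thesis using assms(2,3) by (metis (no_types) bspec)
qed

lemma KC_eq: "KC k P = (\<Union>i<k. verts i)"
  unfolding KC_def verts_def by (simp add: P_eq)

lemma KC_subset: "KC k P \<subseteq> V"
  using missing_path_at unfolding KC_eq verts_def missing_path_def missing_def by blast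

lemma not_missing_across:
  assumes "i < k" "j < k" "i \<noteq> j" "u \<in> verts i" "v \<in> verts j"
  shows "\<not> missing V arc u v"
proof
  assume "missing V arc u v"
  then have "v \<in> verts i"
    using missing_path_closed[OF missing_path_at] assms(1,4) unfolding verts_def by blast
  then have "verts i = verts j"
    using missing_path_overlap_subset[OF missing_path_at missing_path_at] assms(1,2,5)
    unfolding verts_def by (metis subset_antisym)
  moreover have "inj_on verts {..<k}"
    using cycle unfolding double_cycle_def verts_def by (simp add: P_eq)
  ultimately show False using assms(1-3) by (auto dest: inj_onD)
qed

lemma not_missing_outside: "u \<in> KC k P \<Longrightarrow> w \<notin> KC k P \<Longrightarrow> \<not> missing V arc u w"
  using missing_path_closed[OF missing_path_at] unfolding KC_eq verts_def by blast

lemma arcs_into_next_mono: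
  assumes "w \<notin> KC k P" "i < k" and pq: "{p, q} \<in> {{pa i, pb i}, {pb i, pc i}}"
    and rs: "{r, s} \<in> {{pa (Suc i mod k), pb (Suc i mod k)}, {pb (Suc i mod k), pc (Suc i mod k)}}"
    and "missing V arc p q"
  shows "arcs_into arc w p q \<le> arcs_into arc w r s"
proof (rule loses_arcs_into_mono[OF oriented loses_next[OF \<open>i < k\<close> pq rs] \<open>missing V arc p q\<close>])
  have j: "Suc i mod k < k" using Suc_mod_less[OF \<open>i < k\<close>] .
  have "p \<in> verts i" "q \<in> verts i" using pq unfolding verts_def doubleton_eq_iff by auto
  moreover have "r \<in> verts (Suc i mod k)" "s \<in> verts (Suc i mod k)"
    using rs unfolding verts_def doubleton_eq_iff by auto
  ultimately show "\<And>u v. u \<in> {p, q} \<Longrightarrow> v \<in> {r, s} \<Longrightarrow> \<not> missing V arc u v"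
    using not_missing_across[OF \<open>i < k\<close> j Suc_mod_neq[OF \<open>i < k\<close>, symmetric]] by auto
  have "verts (Suc i mod k) \<subseteq> KC k P" using j unfolding KC_eq by blast
  then show "\<not> missing V arc r w" "\<not> missing V arc s w"
    using \<open>r \<in> verts (Suc i mod k)\<close> \<open>s \<in> verts (Suc i mod k)\<close>
      not_missing_outside[OF _ \<open>w \<notin> KC k P\<close>] by auto
qed

lemma Suc_mod_surj: "j < k \<Longrightarrow> \<exists>i<k. Suc i mod k = j"
proof (cases j)
  case 0
  then show ?thesis using k_ge_2 by (intro exI[of _ "k - 1"]) simp
next
  case (Suc i)
  then show "j < k \<Longrightarrow> ?thesis" by (intro exI[of _ i]) simp
qed

lemma arcs_into_constant:
  assumes "w \<notin> KC k P"
  obtains t where "\<And>i. i < k \<Longrightarrow> arcs_into arc w (pa i) (pb i) = t"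
    "\<And>i. i < k \<Longrightarrow> arcs_into arc w (pb i) (pc i) = t"
proof -
  let ?A = "\<lambda>i. arcs_into arc w (pa i) (pb i)" and ?B = "\<lambda>i. arcs_into arc w (pb i) (pc i)"
  have AA: "?A i \<le> ?A (Suc i mod k)" and AB: "?A i \<le> ?B (Suc i mod k)"
    and BA: "?B i \<le> ?A (Suc i mod k)" if "i < k" for i
    using arcs_into_next_mono[OF assms that _ _ missing_edges_at(1)[OF that]]
      arcs_into_next_mono[OF assms that _ _ missing_edges_at(2)[OF that]] by simp_all
  define t where "t = ?A 0"
  have A: "?A i = t" if "i < k" for i
    using cyclically_mono_const[of k ?A, OF _ AA that] k_ge_2 unfolding t_def by simp
  have "?B j = t" if "j < k" for j
  proof -
    obtain i where "i < k" "Suc i mod k = j" using Suc_mod_surj[OF \<open>j < k\<close>] by blast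
    then show ?thesis
      using BA[of j] AB[of i] A[of i] A[OF Suc_mod_less[OF that]] \<open>j < k\<close> by fastforce
  qed
  with A show ?thesis using that by blast
qed

lemma arcs_into_not_always_one:
  assumes "w \<notin> KC k P" and one: "\<And>i. i < k \<Longrightarrow> arcs_into arc w (pa i) (pb i) = 1"
  shows False
proof -
  define s where "s i = (if arc (pb i) w then pb i else pa i)" for i
  have s: "s i \<in> {pa i, pb i}" "arc (s i) w" if "i < k" for i
    using one[OF that] unfolding s_def arcs_into_def by (auto split: if_splits)
  show False
  proof (rule no_absorbing_cycle[OF oriented k_ge_2])
    fix i assume "i < k"
    have j: "Suc i mod k < k" using Suc_mod_less[OF \<open>i < k\<close>] .
    show "absorbs V arc (s (Suc i mod k)) (s i)"
    proof (rule loses_arcs_into_one_absorbs[OF oriented loses_next[OF \<open>i < k\<close>]])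
      show "{pa i, pb i} \<in> {{pa i, pb i}, {pb i, pc i}}" by simp
      show "{pa (Suc i mod k), pb (Suc i mod k)} \<in>
        {{pa (Suc i mod k), pb (Suc i mod k)}, {pb (Suc i mod k), pc (Suc i mod k)}}" by simp
      show "\<And>u v. u \<in> {pa i, pb i} \<Longrightarrow> v \<in> {pa (Suc i mod k), pb (Suc i mod k)} \<Longrightarrow>
          \<not> missing V arc u v"
        using not_missing_across[OF \<open>i < k\<close> j Suc_mod_neq[OF \<open>i < k\<close>, symmetric]]
        unfolding verts_def by blast
      have "verts (Suc i mod k) \<subseteq> KC k P" using j unfolding KC_eq by blast
      then show "\<not> missing V arc (pa (Suc i mod k)) w" "\<not> missing V arc (pb (Suc i mod k)) w"
        using not_missing_outside \<open>w \<notin> KC k P\<close> unfolding verts_def by blast+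
    qed (use s[OF \<open>i < k\<close>] s[OF j] one[OF j] missing_edges_at \<open>i < k\<close> j in auto)
  next
    fix i j assume "i < k" "j < k" "i \<noteq> j"
    then show "\<not> missing V arc (s i) (s j)"
      using not_missing_across s unfolding verts_def by blast
  qed
qed

lemma outside_arcs_uniform:
  assumes "w \<notin> KC k P"
  shows "(\<forall>u \<in> KC k P. arc u w) \<or> (\<forall>u \<in> KC k P. \<not> arc u w)"
proof -
  obtain t where A: "\<And>i. i < k \<Longrightarrow> arcs_into arc w (pa i) (pb i) = t"
    and B: "\<And>i. i < k \<Longrightarrow> arcs_into arc w (pb i) (pc i) = t"
    using arcs_into_constant[OF assms] by blast
  have "t \<noteq> 1" using arcs_into_not_always_one[OF assms] A by blast
  moreover have "t \<le> 2" using A[of 0] k_ge_2 unfolding arcs_into_def by auto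
  ultimately consider "t = 0" | "t = 2" by linarith
  then show ?thesis
    using A B unfolding KC_eq verts_def arcs_into_def by cases (fastforce split: if_splits)+
qed

lemma KC_interval:
  assumes "u \<in> KC k P" "v \<in> KC k P"
  shows "outN V arc u - KC k P = outN V arc v - KC k P \<and>
         inN V arc u - KC k P = inN V arc v - KC k P"
proof -
  have flip: "arc w x \<longleftrightarrow> \<not> arc x w" if "x \<in> KC k P" "w \<in> V" "w \<notin> KC k P" for x w
    using arc_if_not_missing[of x V w arc] not_missing_outside[OF that(1,3)]
      oriented_graph_asym[OF oriented] KC_subset that by blast
  show ?thesis
    using outside_arcs_uniform assms flip unfolding outN_def inN_def by blast
qed

end

theorem proposition4p15:
  fixes V :: "'a set" and arc :: "'a \<Rightarrow> 'a \<Rightarrow> bool"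
    and k :: nat and P :: "nat \<Rightarrow> 'a \<times> 'a \<times> 'a"
  assumes "tournament_missing_P2 V arc"
    and "double_cycle V arc k P"
  shows "\<forall>u \<in> KC k P. \<forall>v \<in> KC k P.
           outN V arc u - KC k P = outN V arc v - KC k P \<and>
           inN V arc u - KC k P = inN V arc v - KC k P"
proof -
  interpret double_cycle_in_P2_tournament V arc k P
    using assms by unfold_locales
  show ?thesis using KC_interval by blast
qed

end
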